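(* Let $a_{01}^0(u)=64u^3\sin2u+48u^2\cos2u-44u\sin2u-4u\cos u\sin2u+3\cos2u-3\cos6u$ and let $F[a_{01}^0]=\inf\{u>0:a_{01}^0(u)=0\}$. Then $F[a_{01}^0]\in(\frac34\pi,\pi)$, and $a_{01}^0(u)<0$ for all $u\in(0,F[a_{01}^0])$. *)

theory Defs
  imports Complex_Main
begin

definition a01 :: "real \<Rightarrow> real" where
  "a01 u = 64 * u^3 * sin (2*u) + 48 * u^2 * cos (2*u) - 44 * u * sin (2*u)
           - 4 * u * cos u * sin (2*u) + 3 * cos (2*u) - 3 * cos (6*u)"

definition first_zero :: "(real \<Rightarrow> real) \<Rightarrow> real" where
  "first_zero f = Inf {u. u > 0 \<and> f u = 0}"

end

theory Submission
  imports Defs "HOL-Decision_Procs.Polynomial_List" "HOL-Analysis.Complex_Transcendental"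
begin

(* Near 0 the function a01 vanishes to fourth order, so there it is handled by computation:
   replacing sin and cos by Taylor polynomials with Lagrange remainders gives
   a01 u <= u^4 h(25 u^2 / 64) on (0, 8/5] for an explicit polynomial h with rounded
   coefficients, and h < 0 on [0, 1] follows from Horner-scheme bounds on a grid of 48 cells.
   On [pi/2, 5 pi/6] one writes a01 u = sin 2u * B u + 48 u^2 cos 2u with B = a01_cofactor
   positive there, and the signs of sin 2u and cos 2u decide. So a01 < 0 on (0, 5 pi/6],
   while a01 pi = 48 pi^2 > 0, and the intermediate value theorem puts the first zero
   in [5 pi/6, pi). *)

lemma poly_append:
  fixes x :: "'a::comm_semiring_1"
  shows "poly (p @ q) x = poly p x + x ^ length p * poly q x"
  by (induction p) (simp_all add: algebra_simps)

lemma poly_replicate_zero_append: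
  fixes x :: "'a::comm_semiring_1"
  shows "poly (replicate n 0 @ p) x = x ^ n * poly p x"
  by (induction n) (simp_all add: mult.assoc)

lemma poly_map_upt:
  fixes x :: "'a::comm_semiring_1"
  shows "poly (map f [0..<n]) x = (\<Sum>m<n. f m * x ^ m)"
  by (induction n) (simp_all add: poly_append mult.commute)

definition monom :: "'a::comm_semiring_1 \<Rightarrow> nat \<Rightarrow> 'a list" where
  "monom c n = replicate n 0 @ [c]"

lemma poly_monom: "poly (monom c n) x = c * x ^ n"
  by (simp add: monom_def poly_replicate_zero_append mult.commute)

lemma poly_nonneg:
  fixes x :: "'a::linordered_semidom"
  shows "list_all (\<lambda>c. 0 \<le> c) p \<Longrightarrow> 0 \<le> x \<Longrightarrow> 0 \<le> poly p x"
  by (induction p) simp_all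

lemma poly_le_poly_coeffwise:
  fixes x :: "'a::linordered_idom"
  assumes "list_all (\<lambda>c. 0 \<le> c) (q +++ -- p)" "0 \<le> x"
  shows "poly p x \<le> poly q x"
  using poly_nonneg[OF assms] by (simp add: poly_add poly_minus)

lemma abs_poly_le:
  fixes x :: "'a::linordered_idom"
  assumes "0 \<le> x"
  shows "\<bar>poly p x\<bar> \<le> poly (map abs p) x"
proof (induction p)
  case (Cons c p)
  have "\<bar>poly (c # p) x\<bar> \<le> \<bar>c\<bar> + x * \<bar>poly p x\<bar>"
    using assms by (simp add: abs_mult abs_triangle_ineq[THEN order_trans])
  also have "\<dots> \<le> \<bar>c\<bar> + x * poly (map abs p) x"
    using Cons assms by (simp add: mult_left_mono)
  finally show ?case by simp
qed simp

fun subst_scaled_square :: "'a::comm_semiring_1 \<Rightarrow> 'a list \<Rightarrow> 'a list" where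
  "subst_scaled_square c [] = []"
| "subst_scaled_square c (a # p) = a # 0 # map ((*) c) (subst_scaled_square c p)"

lemma poly_subst_scaled_square: "poly (subst_scaled_square c p) x = poly p (c * x\<^sup>2)"
  by (induction p) (simp_all add: poly_cmult_map power2_eq_square algebra_simps)

(* On [l, r] with 0 <= l, the Horner step x * b is maximal at r or at l according to the sign of b. *)
fun horner_upper :: "'a::linordered_idom \<Rightarrow> 'a \<Rightarrow> 'a list \<Rightarrow> 'a" where
  "horner_upper l r [] = 0"
| "horner_upper l r (c # p) =
     c + (let b = horner_upper l r p in if 0 \<le> b then r * b else l * b)"

lemma poly_le_horner_upper:
  assumes "0 \<le> l" "l \<le> x" "x \<le> r"
  shows "poly p x \<le> horner_upper l r p"
proof (induction p)
  case (Cons c p)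
  define b where "b = horner_upper l r p"
  have "x * poly p x \<le> x * b"
    using Cons assms unfolding b_def by (simp add: mult_left_mono)
  also have "\<dots> \<le> (if 0 \<le> b then r * b else l * b)"
    using assms by (auto intro: mult_right_mono mult_right_mono_neg)
  finally show ?case by (simp add: Let_def flip: b_def)
qed simp

fun neg_on_grid :: "'a::linordered_idom list \<Rightarrow> 'a list \<Rightarrow> bool" where
  "neg_on_grid p (l # r # xs) = (l \<le> r \<and> horner_upper l r p < 0 \<and> neg_on_grid p (r # xs))"
| "neg_on_grid p _ = True"

lemma poly_neg_on_grid:
  assumes "neg_on_grid p (l # r # xs)" "0 \<le> l" "l \<le> x" "x \<le> last (r # xs)"
  shows "poly p x < 0"
  using assms
proof (induction xs arbitrary: l r)
  case Nil
  then show ?case using poly_le_horner_upper[of l x r p] by simp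
next
  case (Cons y xs)
  show ?case
  proof (cases "x \<le> r")
    case True
    then show ?thesis using Cons.prems poly_le_horner_upper[of l x r p] by simp
  next
    case False
    then show ?thesis using Cons.prems by (intro Cons.IH[of r y]) auto
  qed
qed

lemma Maclaurin_cos_bound: "\<bar>cos x - (\<Sum>m<n. cos_coeff m * x ^ m)\<bar> \<le> \<bar>x\<bar> ^ n / fact n"
proof -
  obtain t where "cos x = (\<Sum>m<n. cos_coeff m * x ^ m) + cos (t + 1/2 * real n * pi) / fact n * x ^ n"
    using Maclaurin_cos_expansion by blast
  then have "\<bar>cos x - (\<Sum>m<n. cos_coeff m * x ^ m)\<bar> = \<bar>cos (t + 1/2 * real n * pi)\<bar> * (\<bar>x\<bar> ^ n / fact n)"
    by (simp add: abs_mult power_abs)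
  also have "\<dots> \<le> 1 * (\<bar>x\<bar> ^ n / fact n)"
    by (intro mult_right_mono) auto
  finally show ?thesis by simp
qed

lemma mult_le_mult_approx:
  fixes p a b e :: "'a::linordered_idom"
  assumes "\<bar>a - b\<bar> \<le> e"
  shows "p * a \<le> p * b + \<bar>p\<bar> * e"
proof -
  have "p * (a - b) \<le> \<bar>p\<bar> * \<bar>a - b\<bar>"
    by (metis abs_ge_self abs_mult)
  also have "\<dots> \<le> \<bar>p\<bar> * e"
    using assms by (simp add: mult_left_mono)
  finally show ?thesis by (simp add: algebra_simps)
qed

definition sin_taylor :: "real \<Rightarrow> nat \<Rightarrow> real list" where
  "sin_taylor k n = map (\<lambda>m. sin_coeff m * k ^ m) [0..<n]"

definition cos_taylor :: "real \<Rightarrow> nat \<Rightarrow> real list" where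
  "cos_taylor k n = map (\<lambda>m. cos_coeff m * k ^ m) [0..<n]"

lemma poly_sin_taylor: "poly (sin_taylor k n) x = (\<Sum>m<n. sin_coeff m * (k * x) ^ m)"
  by (simp add: sin_taylor_def poly_map_upt power_mult_distrib mult.assoc)

lemma poly_cos_taylor: "poly (cos_taylor k n) x = (\<Sum>m<n. cos_coeff m * (k * x) ^ m)"
  by (simp add: cos_taylor_def poly_map_upt power_mult_distrib mult.assoc)

definition sin_majorant :: "real list \<Rightarrow> real \<Rightarrow> nat \<Rightarrow> real list" where
  "sin_majorant q k n = q *** sin_taylor k n +++ map abs q *** monom (\<bar>k\<bar> ^ n / fact n) n"

definition cos_majorant :: "real list \<Rightarrow> real \<Rightarrow> nat \<Rightarrow> real list" where
  "cos_majorant q k n = q *** cos_taylor k n +++ map abs q *** monom (\<bar>k\<bar> ^ n / fact n) n"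

lemma mult_approx_le_majorant:
  fixes x k f :: real
  assumes "0 \<le> x" "\<bar>f - poly t x\<bar> \<le> \<bar>k * x\<bar> ^ n / fact n"
  shows "poly q x * f \<le> poly (q *** t +++ map abs q *** monom (\<bar>k\<bar> ^ n / fact n) n) x"
proof -
  have "poly q x * f \<le> poly q x * poly t x + \<bar>poly q x\<bar> * (\<bar>k * x\<bar> ^ n / fact n)"
    using assms(2) by (rule mult_le_mult_approx)
  also have "\<dots> \<le> poly q x * poly t x + poly (map abs q) x * (\<bar>k * x\<bar> ^ n / fact n)"
    using abs_poly_le[OF assms(1)] by (intro add_left_mono mult_right_mono) auto
  finally show ?thesis
    using assms(1) by (simp add: poly_add poly_mult poly_monom abs_mult power_mult_distrib)
qed

lemma poly_mult_sin_le_sin_majorant: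
  "0 \<le> x \<Longrightarrow> poly q x * sin (k * x) \<le> poly (sin_majorant q k n) x"
  unfolding sin_majorant_def using Maclaurin_sin_bound[of "k * x" n]
  by (intro mult_approx_le_majorant) (simp_all add: poly_sin_taylor divide_inverse mult.commute)

lemma poly_mult_cos_le_cos_majorant:
  "0 \<le> x \<Longrightarrow> poly q x * cos (k * x) \<le> poly (cos_majorant q k n) x"
  unfolding cos_majorant_def using Maclaurin_cos_bound[of "k * x" n]
  by (intro mult_approx_le_majorant) (simp_all add: poly_cos_taylor)

lemma a01_product_to_sum:
  "a01 u = (64 * u^3 - 44 * u) * sin (2*u) + 48 * u^2 * cos (2*u) - 2 * u * sin (3*u)
           - 2 * u * sin u + 3 * cos (2*u) - 3 * cos (6*u)"
proof -
  have prod: "cos u * sin (2*u) = (sin (3*u) + sin u) / 2"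
    using cos_times_sin[of u "2*u"] by simp
  have "a01 u = 64 * u^3 * sin (2*u) + 48 * u^2 * cos (2*u) - 44 * u * sin (2*u)
      - 4 * u * (cos u * sin (2*u)) + 3 * cos (2*u) - 3 * cos (6*u)"
    unfolding a01_def by (simp add: algebra_simps)
  then show ?thesis
    unfolding prod by (simp add: field_simps)
qed

lemma replicate_numeral: "replicate (numeral n) x = x # replicate (pred_numeral n) x"
  by (simp add: numeral_eq_Suc)

definition a01_majorant :: "real list" where
  "a01_majorant =
     sin_majorant [0, -44, 0, 64] 2 31 +++ cos_majorant [0, 0, 48] 2 30
     +++ sin_majorant [0, -2] 3 31 +++ sin_majorant [0, -2] 1 31
     +++ cos_majorant [3] 2 30 +++ cos_majorant [-3] 6 30"

lemma a01_le_majorant: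
  assumes "0 \<le> u"
  shows "a01 u \<le> poly a01_majorant u"
proof -
  have "a01 u = poly [0, -44, 0, 64] u * sin (2*u) + poly [0, 0, 48] u * cos (2*u)
      + poly [0, -2] u * sin (3*u) + poly [0, -2] u * sin (1*u)
      + poly [3] u * cos (2*u) + poly [-3] u * cos (6*u)"
    unfolding a01_product_to_sum by (simp add: algebra_simps power2_eq_square power3_eq_cube)
  also have "\<dots> \<le> poly a01_majorant u"
    unfolding a01_majorant_def poly_add
    using assms by (intro add_mono poly_mult_sin_le_sin_majorant poly_mult_cos_le_cos_majorant)
  finally show ?thesis .
qed

(* The coefficients of a01_majorant, divided by u^4 and rescaled by u^2 = 64/25 v (which maps
   u in [0, 8/5] onto v in [0, 1]), rounded up to five decimals. *)
definition h01 :: "real list" where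
  "h01 = [-60, 320, -36099413/50000, 40681831/50000, -58176761/100000, 5922503/20000,
    -569149/5000, 3428961/100000, -831643/100000, 82949/50000, -27697/100000, 491/12500,
    -239/50000, 51/100000, 1/100000, 1/100000]"

lemma a01_majorant_le_h01:
  assumes "0 \<le> u"
  shows "poly a01_majorant u \<le> u ^ 4 * poly h01 (25/64 * u\<^sup>2)"
proof -
  have "list_all (\<lambda>c. 0 \<le> c) ((replicate 4 0 @ subst_scaled_square (25/64) h01) +++ -- a01_majorant)"
    unfolding a01_majorant_def sin_majorant_def cos_majorant_def sin_taylor_def cos_taylor_def
      monom_def h01_def poly_minus_def
    by (simp add: upt_rec sin_coeff_def cos_coeff_def fact_numeral replicate_numeral)
  from poly_le_poly_coeffwise[OF this assms] show ?thesis
    by (simp add: poly_replicate_zero_append poly_subst_scaled_square)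
qed

lemma h01_neg:
  assumes "0 \<le> v" "v \<le> 1"
  shows "poly h01 v < 0"
proof -
  have grid: "neg_on_grid h01 (0 # 1/48 # map (\<lambda>k. real k / 48) [2..<49])"
    unfolding h01_def by (simp add: Let_def upt_rec)
  show ?thesis
    using assms by (intro poly_neg_on_grid[OF grid]) (simp_all add: upt_rec)
qed

lemma a01_neg_near_zero:
  assumes "0 < u" "u \<le> 8/5"
  shows "a01 u < 0"
proof -
  have "a01 u \<le> u ^ 4 * poly h01 (25/64 * u\<^sup>2)"
    using a01_le_majorant a01_majorant_le_h01 assms(1) by (meson less_imp_le order_trans)
  also have "\<dots> < 0"
  proof (rule mult_pos_neg)
    have "u\<^sup>2 \<le> (8/5)\<^sup>2"
      using assms by (intro power_mono) auto
    then show "poly h01 (25/64 * u\<^sup>2) < 0"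
      by (intro h01_neg) (auto simp: power_divide)
  qed (use assms in simp)
  finally show ?thesis .
qed

definition a01_cofactor :: "real \<Rightarrow> real" where
  "a01_cofactor u = 64 * u^3 - 44 * u - 4 * u * cos u + 12 * cos (2*u) * sin (2*u)"

lemma a01_sin_cos_form: "a01 u = sin (2*u) * a01_cofactor u + 48 * u\<^sup>2 * cos (2*u)"
proof -
  have "cos (6*u) = 4 * cos (2*u) ^ 3 - 3 * cos (2*u)"
    using cos_treble_cos[of "2*u"] by simp
  moreover have "(sin (2*u))\<^sup>2 + (cos (2*u))\<^sup>2 = 1"
    by simp
  ultimately show ?thesis
    unfolding a01_def a01_cofactor_def by algebra
qed

lemma a01_cofactor_lower_bound:
  assumes "3/2 \<le> u"
  shows "64 * u^3 - 48 * u - 12 \<le> a01_cofactor u"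
    and "0 < 64 * u^3 - 48 * u - 12"
proof -
  have "u * cos u \<le> u"
    using assms mult_left_le[of "cos u" u] by simp
  moreover have "\<bar>cos (2*u) * sin (2*u)\<bar> \<le> 1"
    unfolding abs_mult by (intro mult_le_one) auto
  ultimately show "64 * u^3 - 48 * u - 12 \<le> a01_cofactor u"
    unfolding a01_cofactor_def by linarith
  have "3/2 * u \<le> u\<^sup>2" "3/2 * u\<^sup>2 \<le> u^3"
    using assms by (simp_all add: power2_eq_square power3_eq_cube mult_right_mono)
  then show "0 < 64 * u^3 - 48 * u - 12"
    using assms by linarith
qed

lemma a01_neg_pi_half_to_3_4_pi:
  assumes "pi/2 \<le> u" "u \<le> 3/4 * pi"
  shows "a01 u < 0"
proof -
  have "3/2 \<le> u"
    using assms pi_gt3 by linarith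
  then have cofactor: "0 < a01_cofactor u"
    using a01_cofactor_lower_bound by (meson less_le_trans)
  have "2*u < 2*pi"
    using assms pi_gt_zero by linarith
  then have s: "sin (2*u) \<le> 0"
    using assms by (intro sin_le_zero) auto
  have "0 \<le> cos (2*u - pi)"
    using assms by (intro cos_ge_zero) auto
  then have c: "cos (2*u) \<le> 0"
    by simp
  have "0 < u\<^sup>2"
    using \<open>3/2 \<le> u\<close> by simp
  have "sin (2*u) * a01_cofactor u < 0 \<or> 48 * u\<^sup>2 * cos (2*u) < 0"
  proof (cases "sin (2*u) = 0")
    case True
    then have "cos (2*u) = -1"
      using c sin_cos_squared_add[of "2*u"] by (simp add: power2_eq_1_iff)
    then show ?thesis
      using \<open>0 < u\<^sup>2\<close> by simp
  next
    case False
    then show ?thesis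
      using s cofactor by (simp add: mult_neg_pos)
  qed
  moreover have "sin (2*u) * a01_cofactor u \<le> 0" "48 * u\<^sup>2 * cos (2*u) \<le> 0"
    using s c cofactor \<open>0 < u\<^sup>2\<close> by (simp_all add: mult_nonpos_nonneg mult_nonneg_nonpos)
  ultimately show ?thesis
    unfolding a01_sin_cos_form by linarith
qed

lemma a01_neg_3_4_pi_to_5_6_pi:
  assumes "3/4 * pi \<le> u" "u \<le> 5/6 * pi"
  shows "a01 u < 0"
proof -
  have "9/4 \<le> u"
    using assms pi_gt3 by linarith
  then have cofactor: "64 * u^3 - 48 * u - 12 \<le> a01_cofactor u" "0 < 64 * u^3 - 48 * u - 12"
    using a01_cofactor_lower_bound by auto
  have "sin (pi/6) \<le> sin (2*pi - 2*u)"
    using assms by (subst sin_mono_le_eq) auto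
  then have "sin (2*u) \<le> -1/2"
    by (simp add: sin_30)
  then have "sin (2*u) * a01_cofactor u \<le> -1/2 * a01_cofactor u"
    using cofactor by (intro mult_right_mono) auto
  moreover have "48 * u\<^sup>2 * cos (2*u) \<le> 48 * u\<^sup>2"
    by (simp add: mult_left_le)
  moreover have "9/4 * u \<le> u\<^sup>2" "9/4 * u\<^sup>2 \<le> u^3"
    using \<open>9/4 \<le> u\<close> by (simp_all add: power2_eq_square power3_eq_cube mult_right_mono)
  ultimately show ?thesis
    unfolding a01_sin_cos_form using cofactor \<open>9/4 \<le> u\<close> by linarith
qed

lemma a01_neg:
  assumes "0 < u" "u \<le> 5/6 * pi"
  shows "a01 u < 0"
proof -
  consider "u \<le> 8/5" | "pi/2 \<le> u \<and> u \<le> 3/4 * pi" | "3/4 * pi \<le> u"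
    using pi_approx(2) by (simp, linarith)
  then show ?thesis
    using assms a01_neg_near_zero a01_neg_pi_half_to_3_4_pi a01_neg_3_4_pi_to_5_6_pi by cases auto
qed

lemma first_zero_bounds:
  fixes f :: "real \<Rightarrow> real"
  assumes neg: "\<And>u. 0 < u \<Longrightarrow> u \<le> c \<Longrightarrow> f u < 0"
    and "0 < c" "c \<le> d" "0 < f d" "continuous_on {c..d} f"
  shows "first_zero f \<in> {c..<d} \<and> (\<forall>u. 0 < u \<and> u < first_zero f \<longrightarrow> f u < 0)"
proof -
  define S where "S = {u. 0 < u \<and> f u = 0}"
  have lower: "c \<le> x" if "x \<in> S" for x
    using that neg[of x] unfolding S_def by force
  have "bdd_below S"
    unfolding S_def by (rule bdd_belowI[of _ 0]) auto
  obtain z where z: "c \<le> z" "z \<le> d" "f z = 0"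
    using IVT'[of f c 0 d] assms by force
  moreover have "z \<noteq> d"
    using z \<open>0 < f d\<close> by auto
  ultimately have "z \<in> S" "z < d"
    using assms unfolding S_def by auto
  have "Inf S \<le> z"
    using \<open>z \<in> S\<close> \<open>bdd_below S\<close> by (rule cInf_lower)
  moreover have "c \<le> Inf S"
    using \<open>z \<in> S\<close> lower by (intro cInf_greatest) auto
  ultimately have "first_zero f \<in> {c..<d}"
    unfolding first_zero_def S_def[symmetric] using \<open>z < d\<close> by auto
  moreover have "f u < 0" if u: "0 < u" "u < first_zero f" for u
  proof (rule ccontr)
    assume "\<not> f u < 0"
    then have "c < u"
      using neg u(1) by force
    then obtain x where "c \<le> x" "x \<le> u" "f x = 0"
      using IVT'[of f c 0 u] assms \<open>\<not> f u < 0\<close> \<open>first_zero f \<in> {c..<d}\<close> u(2)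
      by (force intro: continuous_on_subset)
    then have "first_zero f \<le> x"
      unfolding first_zero_def S_def[symmetric] using assms
      by (intro cInf_lower[OF _ \<open>bdd_below S\<close>]) (auto simp: S_def)
    then show False
      using \<open>x \<le> u\<close> u(2) by linarith
  qed
  ultimately show ?thesis
    by blast
qed

theorem lemma5p3:
  shows "first_zero a01 \<in> {3/4*pi<..<pi} \<and> (\<forall>u. 0 < u \<and> u < first_zero a01 \<longrightarrow> a01 u < 0)"
proof -
  have "a01 pi = 48 * pi\<^sup>2"
    by (simp add: a01_def)
  then have "0 < a01 pi"
    by simp
  moreover have "continuous_on {5/6 * pi..pi} a01"
    unfolding a01_def by (intro continuous_intros)
  ultimately have "first_zero a01 \<in> {5/6 * pi..<pi} \<and> (\<forall>u. 0 < u \<and> u < first_zero a01 \<longrightarrow> a01 u < 0)"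
    using a01_neg by (intro first_zero_bounds) auto
  then show ?thesis
    by auto
qed

end
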